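(* Suppose the standing assumptions (1)–(5) below hold. Let the updated dataset $\mathcal{D}'=(\mathbf{Z}',\mathbf{y})$ arise from $\mathcal{D}$ by any single or batch removal request, each request being either a feature removal (zeroing the entry of a node in some $\mathbf{x}_i$) or an entire node removal (zeroing that entry of $\mathbf{x}_i$ and the corresponding row and column of $\mathbf{S}_i$), with the embeddings of affected graphs recomputed by the GST and all other embeddings unchanged. Then the updated model $\mathbf{w}'=\mathbf{w}^\star+\mathbf{H}_{\mathbf{w}^\star}^{-1}\Delta$ satisfies $$\|\nabla L(\mathbf{w}',\mathcal{D}')\|\leq\gamma_2F\,\|\mathbf{Z}'\|\,\|\mathbf{H}_{\mathbf{w}^\star}^{-1}\Delta\|\,\|\mathbf{Z}'\mathbf{H}_{\mathbf{w}^\star}^{-1}\Delta\|,\qquad F=\sqrt{\sum_{l=0}^{L-1}B^{2l}},$$ where $\mathbf{Z}'$ is the data matrix of $\mathcal{D}'$ and $B$ is the upper frame constant of the graph wavelets used in the GST.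
   Context: Setting (graph classification). There are $n$ training graphs $\mathcal{G}_1,\dots,\mathcal{G}_n$. Graph $\mathcal{G}_i$ has $g_i$ nodes, a symmetric adjacency matrix $\mathbf{S}_i\in\mathbb{R}^{g_i\times g_i}$ (the graph shift operator), a node signal $\mathbf{x}_i\in\mathbb{R}^{g_i}$ (one scalar feature per node) and a label $y_i$. Graph scattering transform (GST). Fix positive integers $J,L$ and wavelet kernel functions $h_1,\dots,h_J:\mathbb{R}\to\mathbb{R}$. For a symmetric $\mathbf{S}=\mathbf{V}\mathbf{\Lambda}\mathbf{V}^T$ with eigenvalues $\lambda_1,\dots,\lambda_g$, set $\mathbf{H}_j(\mathbf{S})=\mathbf{V}\,\mathrm{diag}(h_j(\lambda_1),\dots,h_j(\lambda_g))\mathbf{V}^T$. The wavelets form a frame: there are constants $0<A\le B$ with $A^2\|\mathbf{x}\|^2\le\sum_{j=1}^J\|\mathbf{H}_j(\mathbf{S})\mathbf{x}\|^2\le B^2\|\mathbf{x}\|^2$ for all $\mathbf{x}$ (for all shift operators considered). Let $\rho$ be the entrywise absolute value. For a path $p=(j_1,\dots,j_l)$ with $j_k\in\{1,\dots,J\}$ and $0\le l\le L-1$, define $\Phi_{()}(\mathbf{S},\mathbf{x})=\mathbf{x}$ and $\Phi_{(j_1,\dots,j_l)}(\mathbf{S},\mathbf{x})=\rho\big(\mathbf{H}_{j_l}(\mathbf{S})\Phi_{(j_1,\dots,j_{l-1})}(\mathbf{S},\mathbf{x})\big)$, and the scalar coefficient $\phi_p(\mathbf{S},\mathbf{x})=U\Phi_p(\mathbf{S},\mathbf{x})$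 with the averaging operator $U=\frac{1}{g}\mathbf{1}^T$ ($g$ the number of nodes). The embedding $\Phi(\mathbf{S},\mathbf{x})\in\mathbb{R}^d$, $d=\sum_{l=0}^{L-1}J^l$, is the concatenation of all $\phi_p(\mathbf{S},\mathbf{x})$. Set $\mathbf{z}_i=\Phi(\mathbf{S}_i,\mathbf{x}_i)$, let $\mathbf{Z}\in\mathbb{R}^{n\times d}$ have rows $\mathbf{z}_i^T$, and $\mathcal{D}=(\mathbf{Z},\mathbf{y})$. Learning and update. $\ell(s,y)$ is convex and twice differentiable in $s$; $\ell'$, $\ell''$ denote derivatives in $s$, and $\nabla$, $\nabla^2$ denote gradient/Hessian in $\mathbf{w}$. For a dataset $\mathcal{D}=(\mathbf{Z},\mathbf{y})$, $L(\mathbf{w},\mathcal{D})=\sum_{i=1}^n\big(\ell(\mathbf{w}^T\mathbf{z}_i,y_i)+\frac{\lambda}{2}\|\mathbf{w}\|^2\big)$ with $\lambda>0$, and $\mathbf{w}^\star=\arg\min_{\mathbf{w}}L(\mathbf{w},\mathcal{D})$. For the updated dataset $\mathcal{D}'$, set $\mathbf{H}_{\mathbf{w}^\star}=\nabla^2L(\mathbf{w}^\star,\mathcal{D}')$ and $\Delta=\nabla L(\mathbf{w}^\star,\mathcal{D})-\nabla L(\mathbf{w}^\star,\mathcal{D}')$. Norms are $\ell_2$ for vectors and operator norm for matrices. Standing assumptions: there are constants $C_1,C_2,\gamma_1,\gamma_2$ such that for every embedding $\mathbf{z}_i$ (of $\mathcal{D}$ or $\mathcal{D}'$) and every $\mathbf{w}\in\mathbb{R}^d$: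 (1) $\|\nabla\ell(\mathbf{w}^T\mathbf{z}_i,y_i)\|\le C_1$; (2) $|\ell'(\mathbf{w}^T\mathbf{z}_i,y_i)|\le C_2$; (3) $\ell'$ is $\gamma_1$-Lipschitz; (4) $\ell''$ is $\gamma_2$-Lipschitz; (5) the signals (before and after removal) satisfy $|[\mathbf{x}_i]_j|\le1$ for all $i$ and all $j\in\{1,\dots,g_i\}$. *)

theory Defs
  imports "HOL-Analysis.Analysis"
begin

text \<open>Finite-dimensional vectors/matrices of varying size (one size g per graph) are
  represented as functions on nat, only the entries with index < g being meaningful.\<close>

definition orth_mat :: "nat \<Rightarrow> (nat \<Rightarrow> nat \<Rightarrow> real) \<Rightarrow> bool" where
  "orth_mat g V \<longleftrightarrow> (\<forall>i<g. \<forall>j<g. (\<Sum>k<g. V k i * V k j) = (if i = j then 1 else 0))"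

definition spec_decomp :: "nat \<Rightarrow> (nat \<Rightarrow> nat \<Rightarrow> real) \<Rightarrow> (nat \<Rightarrow> nat \<Rightarrow> real) \<Rightarrow> (nat \<Rightarrow> real) \<Rightarrow> bool" where
  "spec_decomp g S V lam \<longleftrightarrow> orth_mat g V \<and>
     (\<forall>i<g. \<forall>j<g. S i j = (\<Sum>k<g. V i k * lam k * V j k))"

definition matfun :: "(real \<Rightarrow> real) \<Rightarrow> nat \<Rightarrow> (nat \<Rightarrow> nat \<Rightarrow> real) \<Rightarrow> nat \<Rightarrow> nat \<Rightarrow> real" where
  "matfun h g S =
     (let (V, lam) = (SOME (V, lam). spec_decomp g S V lam)
      in (\<lambda>i j. if i < g \<and> j < g then (\<Sum>k<g. V i k * h (lam k) * V j k) else 0))"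

definition mat_apply :: "nat \<Rightarrow> (nat \<Rightarrow> nat \<Rightarrow> real) \<Rightarrow> (nat \<Rightarrow> real) \<Rightarrow> nat \<Rightarrow> real" where
  "mat_apply g M u = (\<lambda>a. \<Sum>b<g. M a b * u b)"

definition sqnorm :: "nat \<Rightarrow> (nat \<Rightarrow> real) \<Rightarrow> real" where
  "sqnorm g u = (\<Sum>a<g. (u a)\<^sup>2)"

definition gst_paths :: "nat \<Rightarrow> nat \<Rightarrow> nat list set" where
  "gst_paths J L = {p. length p < L \<and> set p \<subseteq> {1..J}}"

definition gst_Phi :: "(nat \<Rightarrow> real \<Rightarrow> real) \<Rightarrow> nat \<Rightarrow> (nat \<Rightarrow> nat \<Rightarrow> real) \<Rightarrow> (nat \<Rightarrow> real) \<Rightarrow> nat list \<Rightarrow> nat \<Rightarrow> real" where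
  "gst_Phi h g S x p =
     foldl (\<lambda>v j. (\<lambda>a. \<bar>mat_apply g (matfun (h j) g S) v a\<bar>)) x p"

definition gst_coeff :: "(nat \<Rightarrow> real \<Rightarrow> real) \<Rightarrow> nat \<Rightarrow> (nat \<Rightarrow> nat \<Rightarrow> real) \<Rightarrow> (nat \<Rightarrow> real) \<Rightarrow> nat list \<Rightarrow> real" where
  "gst_coeff h g S x p = (1 / real g) * (\<Sum>a<g. gst_Phi h g S x p a)"

text \<open>The embedding Phi(S,x) in R^d: the coordinates of the parameter space 'd are put in
  bijection with the paths by pidx (the order of concatenation).\<close>
definition gst_embed :: "('d::finite \<Rightarrow> nat list) \<Rightarrow> (nat \<Rightarrow> real \<Rightarrow> real) \<Rightarrow> nat \<Rightarrow> (nat \<Rightarrow> nat \<Rightarrow> real) \<Rightarrow> (nat \<Rightarrow> real) \<Rightarrow> real ^ 'd" where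
  "gst_embed pidx h g S x = (\<chi> k. gst_coeff h g S x (pidx k))"

definition grad :: "(real ^ 'd \<Rightarrow> real) \<Rightarrow> real ^ 'd \<Rightarrow> real ^ 'd" where
  "grad f w = (SOME v. (f has_derivative (\<lambda>u. v \<bullet> u)) (at w))"

definition hess :: "(real ^ 'd \<Rightarrow> real) \<Rightarrow> real ^ 'd \<Rightarrow> real ^ 'd ^ 'd" where
  "hess f w = (SOME H. (grad f has_derivative (\<lambda>u. H *v u)) (at w))"

definition Lfun :: "(real \<Rightarrow> 'y \<Rightarrow> real) \<Rightarrow> real \<Rightarrow> nat \<Rightarrow> (nat \<Rightarrow> real ^ 'd) \<Rightarrow> (nat \<Rightarrow> 'y) \<Rightarrow> real ^ 'd \<Rightarrow> real" where
  "Lfun l lam n Z y w = (\<Sum>i<n. l (w \<bullet> Z i) (y i) + lam / 2 * (norm w)\<^sup>2)"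

definition rows_apply_norm :: "nat \<Rightarrow> (nat \<Rightarrow> real ^ 'd) \<Rightarrow> real ^ 'd \<Rightarrow> real" where
  "rows_apply_norm n Z v = sqrt (\<Sum>i<n. (Z i \<bullet> v)\<^sup>2)"

definition rows_opnorm :: "nat \<Rightarrow> (nat \<Rightarrow> real ^ 'd) \<Rightarrow> real" where
  "rows_opnorm n Z = (SUP v\<in>{v. norm v \<le> 1}. rows_apply_norm n Z v)"

end

theory Submission
  imports Defs
begin

text \<open>Since w* minimises L(-, D), the vector Delta equals -grad L(w*, D'), so w' = w* + v with
  v = H^-1 Delta is one Newton step for L(-, D') from w* (H is invertible because the loss is
  convex and lambda > 0). After a Newton step the gradient is sum_i r_i z'_i, where r_i is the
  first-order Taylor remainder of l' at w*^T z'_i with increment v^T z'_i; as l'' is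
  gamma2-Lipschitz, |r_i| <= gamma2 (v^T z'_i)^2 <= gamma2 ||z'_i|| ||v|| |v^T z'_i|.
  The upper frame bound lets every scattering layer carry at most B^2 times the energy of the
  previous one; by Cauchy-Schwarz a coefficient satisfies phi_p^2 <= ||Phi_p||^2 / g, and
  ||x||^2 <= g for a signal bounded by 1, so ||z'_i||^2 <= sum_l B^(2l) = F^2.
  Finally ||sum_i r_i z'_i|| <= ||Z'|| ||r||.\<close>

lemma grad_eqI:
  fixes f :: "real ^ 'd \<Rightarrow> real"
  assumes "(f has_derivative (\<lambda>u. v \<bullet> u)) (at w)"
  shows "grad f w = v"
  unfolding grad_def
proof (rule some_equality)
  fix v' assume "(f has_derivative (\<lambda>u. v' \<bullet> u)) (at w)"
  from has_derivative_unique[OF this assms] have "(v' - v) \<bullet> (v' - v) = 0"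
    by (simp add: inner_diff_left)
  then show "v' = v" by simp
qed (rule assms)

lemma hess_mulv_eqI:
  fixes f :: "real ^ 'd \<Rightarrow> real"
  assumes "grad f = G" "(G has_derivative H) (at w)"
  shows "hess f w *v u = H u"
proof -
  have matrix_H: "matrix H *v u = H u" for u
    using assms(2) by (metis has_derivative_bounded_linear matrix_vector_mul(3))
  have "(grad f has_derivative (\<lambda>u. matrix H *v u)) (at w)"
    using assms matrix_H by simp
  moreover from this have "(grad f has_derivative (\<lambda>u. hess f w *v u)) (at w)"
    unfolding hess_def by (rule someI)
  ultimately have "hess f w *v u = matrix H *v u" for u
    by (metis has_derivative_unique)
  then show ?thesis using matrix_H by simp
qed

lemma inner_eq_0_at_minimum:
  fixes f :: "'a::real_inner \<Rightarrow> real"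
  assumes "(f has_derivative (\<lambda>u. v \<bullet> u)) (at w)" "\<And>u. f w \<le> f u"
  shows "v = 0"
proof -
  have "(\<lambda>u. v \<bullet> u) = (\<lambda>u. 0)"
    by (rule differential_zero_maxmin[where S = UNIV, OF _ _ assms(1)]) (use assms(2) in auto)
  then have "v \<bullet> v = 0" by metis
  then show ?thesis by simp
qed

lemma convex_on_deriv2_nonneg:
  fixes f :: "real \<Rightarrow> real"
  assumes convex: "convex_on UNIV f"
    and f': "\<And>s. (f has_real_derivative f' s) (at s)"
    and f'': "\<And>s. (f' has_real_derivative f'' s) (at s)"
  shows "0 \<le> f'' s"
proof -
  have tangent: "f' s * (t - s) \<le> f t - f s" for s t
    by (rule convex_on_imp_above_tangent[where A = UNIV]) (use convex f' in auto)
  have "mono_on UNIV f'"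
  proof (rule mono_onI)
    fix s t :: real assume "s \<le> t"
    have "f' s * (t - s) \<le> f' t * (t - s)"
      using tangent[of s t] tangent[of t s] by (simp add: algebra_simps)
    then show "f' s \<le> f' t"
      using \<open>s \<le> t\<close> by (cases "s = t") (auto simp: mult_le_cancel_right)
  qed
  then show ?thesis by (rule mono_on_imp_deriv_nonneg) (use f'' in auto)
qed

lemma Lipschitz_deriv_remainder_le:
  fixes f f' :: "real \<Rightarrow> real"
  assumes deriv: "\<And>s. (f has_real_derivative f' s) (at s)"
    and Lipschitz: "\<And>s t. \<bar>f' s - f' t\<bar> \<le> c * \<bar>s - t\<bar>"
  shows "\<bar>f b - f a - f' a * (b - a)\<bar> \<le> c * (b - a)\<^sup>2"
proof (cases "b = a")
  case False
  obtain t where between: "if b < a then b < t \<and> t < a else a < t \<and> t < b"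
    and mean_value: "f b = f a + f' t * (b - a)"
    using Taylor[of 1 "\<lambda>m. if m = 0 then f else f'" f "min a b" "max a b" a b] deriv False
    by auto
  have "0 \<le> c" using order_trans[OF abs_ge_zero Lipschitz[of 1 0]] by simp
  have "\<bar>f b - f a - f' a * (b - a)\<bar> = \<bar>f' t - f' a\<bar> * \<bar>b - a\<bar>"
    using mean_value by (simp add: abs_mult[symmetric] algebra_simps)
  also have "\<dots> \<le> c * \<bar>t - a\<bar> * \<bar>b - a\<bar>"
    using Lipschitz by (intro mult_right_mono) auto
  also have "\<dots> \<le> c * \<bar>b - a\<bar> * \<bar>b - a\<bar>"
    using between \<open>0 \<le> c\<close> by (intro mult_right_mono mult_left_mono) (auto split: if_splits)
  finally show ?thesis by (simp add: power2_eq_square)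
qed simp

section \<open>The regularised empirical risk\<close>

definition Lgrad :: "(real \<Rightarrow> 'y \<Rightarrow> real) \<Rightarrow> real \<Rightarrow> nat \<Rightarrow> (nat \<Rightarrow> real ^ 'd) \<Rightarrow> (nat \<Rightarrow> 'y)
    \<Rightarrow> real ^ 'd \<Rightarrow> real ^ 'd" where
  "Lgrad l' lam n Z y w = (\<Sum>i<n. l' (w \<bullet> Z i) (y i) *\<^sub>R Z i + lam *\<^sub>R w)"

definition Lhess :: "(real \<Rightarrow> 'y \<Rightarrow> real) \<Rightarrow> real \<Rightarrow> nat \<Rightarrow> (nat \<Rightarrow> real ^ 'd) \<Rightarrow> (nat \<Rightarrow> 'y)
    \<Rightarrow> real ^ 'd \<Rightarrow> real ^ 'd \<Rightarrow> real ^ 'd" where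
  "Lhess l'' lam n Z y w u = (\<Sum>i<n. (l'' (w \<bullet> Z i) (y i) * (u \<bullet> Z i)) *\<^sub>R Z i + lam *\<^sub>R u)"

lemma has_derivative_comp_inner:
  fixes z :: "'a::real_inner"
  assumes "\<And>s. (f has_real_derivative f' s) (at s)"
  shows "((\<lambda>w. f (w \<bullet> z)) has_derivative (\<lambda>u. f' (w \<bullet> z) * (u \<bullet> z))) (at w)"
proof -
  have "((\<lambda>w. w \<bullet> z) has_derivative (\<lambda>u. u \<bullet> z)) (at w)"
    by (intro derivative_eq_intros) auto
  moreover have "(f has_derivative (\<lambda>s. f' (w \<bullet> z) * s)) (at (w \<bullet> z))"
    using assms unfolding has_field_derivative_def by blast
  ultimately show ?thesis using has_derivative_compose by fastforce
qed

lemma has_derivative_Lfun: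
  assumes l': "\<And>s yy. ((\<lambda>t. l t yy) has_real_derivative l' s yy) (at s)"
  shows "(Lfun l lam n Z y has_derivative (\<lambda>u. Lgrad l' lam n Z y w \<bullet> u)) (at w)"
proof -
  have "((\<lambda>w. (norm w)\<^sup>2) has_derivative (\<lambda>u. 2 * (w \<bullet> u))) (at w)"
    unfolding power2_norm_eq_inner
    by (rule has_derivative_eq_rhs, (intro derivative_eq_intros)) (auto simp: inner_commute)
  then have "((\<lambda>w. \<Sum>i<n. l (w \<bullet> Z i) (y i) + lam / 2 * (norm w)\<^sup>2) has_derivative
      (\<lambda>u. \<Sum>i<n. l' (w \<bullet> Z i) (y i) * (u \<bullet> Z i) + lam / 2 * (2 * (w \<bullet> u)))) (at w)"
    by (intro has_derivative_sum has_derivative_add has_derivative_mult_right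
        has_derivative_comp_inner l')
  then show ?thesis unfolding Lfun_def[abs_def] Lgrad_def
    by (rule has_derivative_eq_rhs) (auto simp: inner_sum_right inner_add_right inner_commute)
qed

lemma grad_Lfun:
  assumes "\<And>s yy. ((\<lambda>t. l t yy) has_real_derivative l' s yy) (at s)"
  shows "grad (Lfun l lam n Z y) = Lgrad l' lam n Z y"
  by (rule ext, rule grad_eqI, rule has_derivative_Lfun) (rule assms)

lemma has_derivative_Lgrad:
  assumes "\<And>s yy. ((\<lambda>t. l' t yy) has_real_derivative l'' s yy) (at s)"
  shows "(Lgrad l' lam n Z y has_derivative Lhess l'' lam n Z y w) (at w)"
  unfolding Lgrad_def[abs_def] Lhess_def[abs_def]
  by (intro has_derivative_sum has_derivative_add has_derivative_scaleR_left
      has_derivative_comp_inner assms has_derivative_scaleR_right has_derivative_ident)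

lemma hess_Lfun_mulv:
  assumes "\<And>s yy. ((\<lambda>t. l t yy) has_real_derivative l' s yy) (at s)"
    and "\<And>s yy. ((\<lambda>t. l' t yy) has_real_derivative l'' s yy) (at s)"
  shows "hess (Lfun l lam n Z y) w *v u = Lhess l'' lam n Z y w u"
  by (rule hess_mulv_eqI[OF grad_Lfun has_derivative_Lgrad]) (use assms in auto)

lemma inner_Lhess_ge:
  assumes "\<And>s yy. 0 \<le> l'' s yy"
  shows "real n * lam * (u \<bullet> u) \<le> u \<bullet> Lhess l'' lam n Z y w u"
proof -
  have "u \<bullet> Lhess l'' lam n Z y w u = (\<Sum>i<n. l'' (w \<bullet> Z i) (y i) * (u \<bullet> Z i)\<^sup>2 + lam * (u \<bullet> u))"
    unfolding Lhess_def by (simp add: inner_sum_right inner_add_right power2_eq_square mult.assoc)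
  moreover have "(\<Sum>i<n. lam * (u \<bullet> u)) \<le> \<dots>"
    using assms by (intro sum_mono) simp
  ultimately show ?thesis by simp
qed

lemma invertible_hess_Lfun:
  assumes l': "\<And>s yy. ((\<lambda>t. l t yy) has_real_derivative l' s yy) (at s)"
    and l'': "\<And>s yy. ((\<lambda>t. l' t yy) has_real_derivative l'' s yy) (at s)"
    and convex: "\<And>yy. convex_on UNIV (\<lambda>s. l s yy)"
    and "0 < n" "0 < lam"
  shows "invertible (hess (Lfun l lam n Z y) w)"
proof -
  have l''_nonneg: "0 \<le> l'' s yy" for s yy
    by (rule convex_on_deriv2_nonneg[where f = "\<lambda>t. l t yy" and f' = "\<lambda>t. l' t yy"])
      (use convex l' l'' in auto)
  have "u = 0" if "hess (Lfun l lam n Z y) w *v u = 0" for u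
  proof -
    have "Lhess l'' lam n Z y w u = 0"
      using that by (simp add: hess_Lfun_mulv[OF l' l''])
    then have "real n * lam * (u \<bullet> u) \<le> 0"
      using inner_Lhess_ge[where l'' = l'', OF l''_nonneg] by (metis inner_zero_right)
    then have "u \<bullet> u \<le> 0"
      using \<open>0 < n\<close> \<open>0 < lam\<close> by (simp add: mult_le_0_iff)
    then show "u = 0"
      by (metis inner_eq_zero_iff inner_ge_zero order_antisym)
  qed
  then show ?thesis
    by (simp add: invertible_left_inverse matrix_left_invertible_ker)
qed

lemma matrix_mul_matrix_inv:
  fixes A :: "real ^ 'n ^ 'n"
  assumes "invertible A"
  shows "A ** matrix_inv A = mat 1"
  using assms unfolding matrix_inv_def invertible_def by (rule someI2_ex) auto

lemma Lhess_hess_Lfun_inv: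
  assumes l': "\<And>s yy. ((\<lambda>t. l t yy) has_real_derivative l' s yy) (at s)"
    and l'': "\<And>s yy. ((\<lambda>t. l' t yy) has_real_derivative l'' s yy) (at s)"
    and convex: "\<And>yy. convex_on UNIV (\<lambda>s. l s yy)"
    and "0 < n" "0 < lam"
  shows "Lhess l'' lam n Z y w (matrix_inv (hess (Lfun l lam n Z y) w) *v b) = b"
proof -
  let ?H = "hess (Lfun l lam n Z y) w"
  have "invertible ?H"
    using assms by (rule invertible_hess_Lfun)
  then have "?H *v (matrix_inv ?H *v b) = b"
    by (simp add: matrix_mul_matrix_inv matrix_vector_mul_assoc)
  then show ?thesis by (simp add: hess_Lfun_mulv[OF l' l''])
qed

lemma Lgrad_Newton_step:
  assumes "Lhess l'' lam n Z y w v = - Lgrad l' lam n Z y w"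
  shows "Lgrad l' lam n Z y (w + v) =
    (\<Sum>i<n. (l' ((w + v) \<bullet> Z i) (y i) - l' (w \<bullet> Z i) (y i) - l'' (w \<bullet> Z i) (y i) * (v \<bullet> Z i)) *\<^sub>R Z i)"
proof -
  have "Lgrad l' lam n Z y (w + v) = Lgrad l' lam n Z y (w + v) - Lgrad l' lam n Z y w - Lhess l'' lam n Z y w v"
    using assms by simp
  also have "\<dots> = (\<Sum>i<n. (l' ((w + v) \<bullet> Z i) (y i) - l' (w \<bullet> Z i) (y i) - l'' (w \<bullet> Z i) (y i) * (v \<bullet> Z i)) *\<^sub>R Z i)"
    unfolding Lgrad_def Lhess_def sum_subtractf[symmetric]
    by (rule sum.cong) (auto simp: algebra_simps)
  finally show ?thesis .
qed

section \<open>Norms of the data matrix\<close>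

lemma rows_apply_norm_eq_L2_set: "rows_apply_norm n Z v = L2_set (\<lambda>i. Z i \<bullet> v) {..<n}"
  by (simp add: rows_apply_norm_def L2_set_def)

lemma rows_apply_norm_le_opnorm_unit:
  fixes Z :: "nat \<Rightarrow> real ^ 'd"
  assumes "norm v \<le> 1"
  shows "rows_apply_norm n Z v \<le> rows_opnorm n Z"
proof -
  have "rows_apply_norm n Z u \<le> (\<Sum>i<n. norm (Z i))" if "norm u \<le> 1" for u
  proof -
    have "rows_apply_norm n Z u \<le> (\<Sum>i<n. \<bar>Z i \<bullet> u\<bar>)"
      unfolding rows_apply_norm_eq_L2_set by (rule L2_set_le_sum_abs)
    also have "\<dots> \<le> (\<Sum>i<n. norm (Z i))"
    proof (rule sum_mono)
      fix i
      have "\<bar>Z i \<bullet> u\<bar> \<le> norm (Z i) * norm u" by (rule Cauchy_Schwarz_ineq2)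
      also have "\<dots> \<le> norm (Z i)" using that by (simp add: mult_left_le)
      finally show "\<bar>Z i \<bullet> u\<bar> \<le> norm (Z i)" .
    qed
    finally show ?thesis .
  qed
  then have "bdd_above (rows_apply_norm n Z ` {v. norm v \<le> 1})"
    by (intro bdd_aboveI2) auto
  then show ?thesis unfolding rows_opnorm_def
    by (rule cSUP_upper[rotated]) (simp add: assms)
qed

lemma rows_opnorm_nonneg: "0 \<le> rows_opnorm n (Z :: nat \<Rightarrow> real ^ 'd)"
  using rows_apply_norm_le_opnorm_unit[of 0 n Z] by (simp add: rows_apply_norm_eq_L2_set L2_set_def)

lemma rows_apply_norm_le_opnorm:
  "rows_apply_norm n (Z :: nat \<Rightarrow> real ^ 'd) v \<le> rows_opnorm n Z * norm v"
proof (cases "v = 0")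
  case True
  then show ?thesis by (simp add: rows_apply_norm_eq_L2_set L2_set_def rows_opnorm_nonneg)
next
  case False
  have "rows_apply_norm n Z v = norm v * rows_apply_norm n Z (v /\<^sub>R norm v)"
    unfolding rows_apply_norm_eq_L2_set using False
    by (subst L2_set_right_distrib) (auto intro!: L2_set_cong)
  also have "\<dots> \<le> norm v * rows_opnorm n Z"
    using False by (intro mult_left_mono rows_apply_norm_le_opnorm_unit) auto
  finally show ?thesis by (simp add: mult.commute)
qed

lemma norm_sum_rows_le:
  fixes Z :: "nat \<Rightarrow> real ^ 'd"
  shows "norm (\<Sum>i<n. r i *\<^sub>R Z i) \<le> L2_set r {..<n} * rows_opnorm n Z"
proof -
  define u where "u = (\<Sum>i<n. r i *\<^sub>R Z i)"
  have "(norm u)\<^sup>2 = (\<Sum>i<n. r i *\<^sub>R Z i) \<bullet> u"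
    by (simp add: power2_norm_eq_inner u_def)
  also have "\<dots> = (\<Sum>i<n. r i * (Z i \<bullet> u))"
    by (simp add: inner_sum_left)
  also have "\<dots> \<le> (\<Sum>i<n. \<bar>r i\<bar> * \<bar>Z i \<bullet> u\<bar>)"
    by (intro sum_mono) (simp add: abs_mult[symmetric])
  also have "\<dots> \<le> L2_set r {..<n} * rows_apply_norm n Z u"
    unfolding rows_apply_norm_eq_L2_set by (rule L2_set_mult_ineq)
  also have "\<dots> \<le> L2_set r {..<n} * rows_opnorm n Z * norm u"
    unfolding mult.assoc by (intro mult_left_mono rows_apply_norm_le_opnorm) simp
  finally have "norm u * norm u \<le> L2_set r {..<n} * rows_opnorm n Z * norm u"
    by (simp add: power2_eq_square)
  then show ?thesis
    using rows_opnorm_nonneg[of n Z] unfolding u_def[symmetric]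
    by (cases "norm u = 0") (auto simp: mult_le_cancel_right)
qed

lemma norm_Lgrad_Newton_step_le:
  assumes l'': "\<And>s yy. ((\<lambda>t. l' t yy) has_real_derivative l'' s yy) (at s)"
    and Lipschitz: "\<And>i s t. i < n \<Longrightarrow> \<bar>l'' s (y i) - l'' t (y i)\<bar> \<le> \<gamma> * \<bar>s - t\<bar>"
    and Newton: "Lhess l'' lam n Z y w v = - Lgrad l' lam n Z y w"
    and rows_bounded: "\<And>i. i < n \<Longrightarrow> norm (Z i) \<le> F"
  shows "norm (Lgrad l' lam n Z y (w + v))
    \<le> \<gamma> * F * rows_opnorm n Z * norm v * rows_apply_norm n Z v"
proof (cases "n = 0")
  case True
  then show ?thesis by (simp add: Lgrad_def rows_apply_norm_def)
next
  case False
  define r where "r i = l' ((w + v) \<bullet> Z i) (y i) - l' (w \<bullet> Z i) (y i) - l'' (w \<bullet> Z i) (y i) * (v \<bullet> Z i)" for i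
  have "0 \<le> \<gamma>" using Lipschitz[of 0 1 0] False by simp
  have "0 \<le> F" using rows_bounded[of 0] False by (meson norm_ge_zero order_trans neq0_conv)
  have "\<bar>r i\<bar> \<le> \<gamma> * F * norm v * \<bar>Z i \<bullet> v\<bar>" if "i < n" for i
  proof -
    have "\<bar>r i\<bar> \<le> \<gamma> * (v \<bullet> Z i)\<^sup>2"
      unfolding r_def
      using Lipschitz_deriv_remainder_le[OF l'' Lipschitz[OF that], of "(w + v) \<bullet> Z i" "w \<bullet> Z i"]
      by (simp add: inner_add_left)
    also have "\<dots> = \<gamma> * \<bar>v \<bullet> Z i\<bar> * \<bar>v \<bullet> Z i\<bar>"
      by (simp add: power2_eq_square)
    also have "\<dots> \<le> \<gamma> * (norm v * F) * \<bar>v \<bullet> Z i\<bar>"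
      using Cauchy_Schwarz_ineq2[of v "Z i"] rows_bounded[OF that] \<open>0 \<le> \<gamma>\<close>
      by (intro mult_right_mono mult_left_mono) (auto elim!: order_trans simp: mult_left_mono)
    finally show ?thesis by (simp add: ac_simps inner_commute)
  qed
  then have "L2_set r {..<n} \<le> L2_set (\<lambda>i. \<gamma> * F * norm v * (Z i \<bullet> v)) {..<n}"
    using L2_set_mono[of "{..<n}" "\<lambda>i. \<bar>r i\<bar>" "\<lambda>i. \<bar>\<gamma> * F * norm v * (Z i \<bullet> v)\<bar>"]
      \<open>0 \<le> \<gamma>\<close> \<open>0 \<le> F\<close> by (simp add: abs_mult L2_set_def power_mult_distrib)
  also have "\<dots> = \<gamma> * F * norm v * rows_apply_norm n Z v"
    unfolding rows_apply_norm_eq_L2_set using \<open>0 \<le> \<gamma>\<close> \<open>0 \<le> F\<close>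
    by (simp add: L2_set_right_distrib)
  finally have "L2_set r {..<n} * rows_opnorm n Z \<le> \<gamma> * F * norm v * rows_apply_norm n Z v * rows_opnorm n Z"
    using rows_opnorm_nonneg by (rule mult_right_mono)
  then show ?thesis
    using norm_sum_rows_le[where r = r and n = n and Z = Z] unfolding Lgrad_Newton_step[OF Newton] r_def[symmetric]
    by (simp add: ac_simps)
qed

section \<open>Energy of the graph scattering transform\<close>

definition gst_layer :: "nat \<Rightarrow> nat \<Rightarrow> nat list set" where
  "gst_layer J l = {p. length p = l \<and> set p \<subseteq> {1..J}}"

lemma finite_gst_layer: "finite (gst_layer J l)"
  unfolding gst_layer_def using finite_lists_length_eq[of "{1..J}" l] by (simp add: conj_commute)

lemma gst_layer_0: "gst_layer J 0 = {[]}"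
  by (auto simp: gst_layer_def)

lemma gst_layer_Suc: "gst_layer J (Suc l) = (\<lambda>(p, j). p @ [j]) ` (gst_layer J l \<times> {1..J})"
proof (intro set_eqI iffI)
  fix q assume q: "q \<in> gst_layer J (Suc l)"
  then have "q \<noteq> []" by (auto simp: gst_layer_def)
  have "butlast q \<in> gst_layer J l"
    using q by (auto simp: gst_layer_def dest: in_set_butlastD)
  moreover have "last q \<in> {1..J}"
    using q \<open>q \<noteq> []\<close> last_in_set unfolding gst_layer_def by blast
  moreover have "q = butlast q @ [last q]" using \<open>q \<noteq> []\<close> by simp
  ultimately show "q \<in> (\<lambda>(p, j). p @ [j]) ` (gst_layer J l \<times> {1..J})" by force
qed (auto simp: gst_layer_def)

lemma sum_gst_layer_Suc:
  "sum f (gst_layer J (Suc l)) = (\<Sum>p\<in>gst_layer J l. \<Sum>j=1..J. f (p @ [j]))"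
proof -
  have inj: "inj_on (\<lambda>(p, j). p @ [j]) (gst_layer J l \<times> {1..J})"
    by (auto simp: inj_on_def)
  show ?thesis
    unfolding gst_layer_Suc sum.reindex[OF inj] sum.cartesian_product by (simp add: case_prod_beta)
qed

lemma sum_gst_paths: "sum f (gst_paths J L) = (\<Sum>l<L. sum f (gst_layer J l))"
proof -
  have "gst_paths J L = (\<Union>l<L. gst_layer J l)"
    by (auto simp: gst_paths_def gst_layer_def)
  then show ?thesis
    by (simp only:) (intro sum.UNION_disjoint finite_lessThan ballI impI finite_gst_layer;
        auto simp: gst_layer_def)
qed

lemma gst_layer_energy_le:
  assumes frame: "\<And>u. (\<Sum>j=1..J. sqnorm g (mat_apply g (matfun (h j) g T) u)) \<le> B\<^sup>2 * sqnorm g u"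
  shows "(\<Sum>p\<in>gst_layer J l. sqnorm g (gst_Phi h g T x p)) \<le> B ^ (2 * l) * sqnorm g x"
proof (induction l)
  case 0
  then show ?case by (simp add: gst_layer_0 gst_Phi_def)
next
  case (Suc l)
  have "(\<Sum>p\<in>gst_layer J (Suc l). sqnorm g (gst_Phi h g T x p))
      = (\<Sum>p\<in>gst_layer J l. \<Sum>j=1..J. sqnorm g (mat_apply g (matfun (h j) g T) (gst_Phi h g T x p)))"
    unfolding sum_gst_layer_Suc by (simp add: gst_Phi_def sqnorm_def)
  also have "\<dots> \<le> (\<Sum>p\<in>gst_layer J l. B\<^sup>2 * sqnorm g (gst_Phi h g T x p))"
    using frame by (rule sum_mono)
  also have "\<dots> \<le> B\<^sup>2 * (B ^ (2 * l) * sqnorm g x)"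
    using Suc.IH by (simp add: sum_distrib_left[symmetric] mult_left_mono)
  finally show ?case by (simp add: power_add power_mult power2_eq_square)
qed

lemma gst_coeff_sq_le: "(gst_coeff h g T x p)\<^sup>2 \<le> sqnorm g (gst_Phi h g T x p) / real g"
proof (cases "g = 0")
  case False
  have "(\<Sum>a<g. gst_Phi h g T x p a)\<^sup>2 \<le> sqnorm g (gst_Phi h g T x p) * real g"
    using sum_squared_le_sum_of_squares[of _ "{..<g}"] by (simp add: sqnorm_def)
  then show ?thesis
    using False by (simp add: gst_coeff_def power_divide field_simps power2_eq_square)
qed (simp add: gst_coeff_def)

lemma norm_gst_embed_le:
  fixes pidx :: "'d::finite \<Rightarrow> nat list"
  assumes pidx: "bij_betw pidx UNIV (gst_paths J L)"
    and frame: "\<And>u. (\<Sum>j=1..J. sqnorm g (mat_apply g (matfun (h j) g T) u)) \<le> B\<^sup>2 * sqnorm g u"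
    and signal_bounded: "\<And>a. a < g \<Longrightarrow> \<bar>x a\<bar> \<le> 1"
  shows "norm (gst_embed pidx h g T x) \<le> sqrt (\<Sum>l<L. B ^ (2 * l))"
proof (rule real_le_rsqrt)
  have average_energy: "sqnorm g x / real g \<le> 1"
  proof -
    have "sqnorm g x \<le> (\<Sum>a<g. 1)"
      unfolding sqnorm_def using signal_bounded by (intro sum_mono) (simp add: abs_square_le_1)
    then show ?thesis by (cases "g = 0") (simp_all add: divide_le_eq_1)
  qed
  have "(norm (gst_embed pidx h g T x))\<^sup>2 = (\<Sum>k\<in>UNIV. (gst_coeff h g T x (pidx k))\<^sup>2)"
    unfolding power2_norm_eq_inner inner_vec_def gst_embed_def by (simp add: power2_eq_square)
  also have "\<dots> = (\<Sum>p\<in>gst_paths J L. (gst_coeff h g T x p)\<^sup>2)"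
    by (rule sum.reindex_bij_betw[OF pidx])
  also have "\<dots> = (\<Sum>l<L. \<Sum>p\<in>gst_layer J l. (gst_coeff h g T x p)\<^sup>2)"
    by (rule sum_gst_paths)
  also have "\<dots> \<le> (\<Sum>l<L. (\<Sum>p\<in>gst_layer J l. sqnorm g (gst_Phi h g T x p)) / real g)"
    unfolding sum_divide_distrib by (intro sum_mono gst_coeff_sq_le)
  also have "\<dots> \<le> (\<Sum>l<L. B ^ (2 * l) * (sqnorm g x / real g))"
    using gst_layer_energy_le[OF frame] by (intro sum_mono) (simp add: divide_right_mono)
  also have "\<dots> \<le> (\<Sum>l<L. B ^ (2 * l))"
    using average_energy by (intro sum_mono mult_left_le) (auto simp: power_mult)
  finally show "(norm (gst_embed pidx h g T x))\<^sup>2 \<le> (\<Sum>l<L. B ^ (2 * l))" .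
qed

theorem theorem4p6:
  fixes n J L :: nat
    and g :: "nat \<Rightarrow> nat"
    and S :: "nat \<Rightarrow> nat \<Rightarrow> nat \<Rightarrow> real"
    and x :: "nat \<Rightarrow> nat \<Rightarrow> real"
    and y :: "nat \<Rightarrow> 'y"
    and h :: "nat \<Rightarrow> real \<Rightarrow> real"
    and A B lam C1 C2 \<gamma>1 \<gamma>2 :: real
    and pidx :: "'d::finite \<Rightarrow> nat list"
    and l l' l'' :: "real \<Rightarrow> 'y \<Rightarrow> real"
    and RF RN :: "(nat \<times> nat) set"
    and wstar :: "real ^ 'd"
    and S' :: "nat \<Rightarrow> nat \<Rightarrow> nat \<Rightarrow> real"
    and x' :: "nat \<Rightarrow> nat \<Rightarrow> real"
    and Z Z' :: "nat \<Rightarrow> real ^ 'd"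
    and Hm :: "real ^ 'd ^ 'd"
    and \<Delta> :: "real ^ 'd"
    and F :: real
  assumes J_pos: "0 < J" and L_pos: "0 < L"
    and pidx: "bij_betw pidx UNIV (gst_paths J L)"
    and S_sym: "\<forall>i<n. \<forall>a<g i. \<forall>b<g i. S i a b = S i b a"
    and S'_def: "S' =  (\<lambda>i a b. if (i, a) \<in> RN \<or> (i, b) \<in> RN then 0 else S i a b)"
    and x'_def: "x' =  (\<lambda>i a. if (i, a) \<in> RF \<union> RN then 0 else x i a)"
    and Z_def: "Z =  (\<lambda>i. gst_embed pidx h (g i) (S i) (x i))"
    and Z'_def: "Z' =  (\<lambda>i. gst_embed pidx h (g i) (S' i) (x' i))"
    and frame_pos: "0 < A" "A \<le> B"
    and frame: "\<forall>i<n. \<forall>T\<in>{S i, S' i}. \<forall>u.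
        A\<^sup>2 * sqnorm (g i) u \<le> (\<Sum>j=1..J. sqnorm (g i) (mat_apply (g i) (matfun (h j) (g i) T) u))
      \<and> (\<Sum>j=1..J. sqnorm (g i) (mat_apply (g i) (matfun (h j) (g i) T) u)) \<le> B\<^sup>2 * sqnorm (g i) u"
    and lam_pos: "0 < lam"
    and l_deriv: "\<forall>s yy. ((\<lambda>t. l t yy) has_real_derivative l' s yy) (at s)"
    and l'_deriv: "\<forall>s yy. ((\<lambda>t. l' t yy) has_real_derivative l'' s yy) (at s)"
    and l_convex: "\<forall>yy. convex_on UNIV (\<lambda>s. l s yy)"
    and A1: "\<forall>i<n. \<forall>z\<in>{Z i, Z' i}. \<forall>w. norm (grad (\<lambda>v. l (v \<bullet> z) (y i)) w) \<le> C1"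
    and A2: "\<forall>i<n. \<forall>z\<in>{Z i, Z' i}. \<forall>w. \<bar>l' (w \<bullet> z) (y i)\<bar> \<le> C2"
    and A3: "\<forall>i<n. \<forall>s t. \<bar>l' s (y i) - l' t (y i)\<bar> \<le> \<gamma>1 * \<bar>s - t\<bar>"
    and A4: "\<forall>i<n. \<forall>s t. \<bar>l'' s (y i) - l'' t (y i)\<bar> \<le> \<gamma>2 * \<bar>s - t\<bar>"
    and A5: "\<forall>i<n. \<forall>a<g i. \<bar>x i a\<bar> \<le> 1"
    and wstar_min: "\<forall>w. Lfun l lam n Z y wstar \<le> Lfun l lam n Z y w"
    and Hm_def: "Hm =  hess (Lfun l lam n Z' y) wstar"
    and \<Delta>_def: "\<Delta> =  grad (Lfun l lam n Z y) wstar - grad (Lfun l lam n Z' y) wstar"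
    and F_def: "F =  sqrt (\<Sum>k<L. B ^ (2 * k))"
  shows "norm (grad (Lfun l lam n Z' y) (wstar + matrix_inv Hm *v \<Delta>))
    \<le> \<gamma>2 * F * rows_opnorm n Z' * norm (matrix_inv Hm *v \<Delta>)
        * rows_apply_norm n Z' (matrix_inv Hm *v \<Delta>)"
proof (cases "n = 0")
  case True
  then show ?thesis by (simp add: grad_Lfun[OF l_deriv[rule_format]] Lgrad_def rows_apply_norm_def)
next
  case False
  note l_deriv = l_deriv[rule_format] and l'_deriv = l'_deriv[rule_format]
  have "Lgrad l' lam n Z y wstar = 0"
    using wstar_min by (intro inner_eq_0_at_minimum[OF has_derivative_Lfun[OF l_deriv]]) auto
  moreover have "Lhess l'' lam n Z' y wstar (matrix_inv Hm *v \<Delta>) = \<Delta>"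
    unfolding Hm_def using l_deriv l'_deriv l_convex False lam_pos
    by (intro Lhess_hess_Lfun_inv) auto
  ultimately have Newton: "Lhess l'' lam n Z' y wstar (matrix_inv Hm *v \<Delta>) = - Lgrad l' lam n Z' y wstar"
    unfolding \<Delta>_def grad_Lfun[OF l_deriv] by simp
  have rows_bounded: "norm (Z' i) \<le> F" if "i < n" for i
    unfolding Z'_def F_def
  proof (rule norm_gst_embed_le[OF pidx])
    show "(\<Sum>j=1..J. sqnorm (g i) (mat_apply (g i) (matfun (h j) (g i) (S' i)) u)) \<le> B\<^sup>2 * sqnorm (g i) u" for u
      using frame that by blast
    show "\<bar>x' i a\<bar> \<le> 1" if "a < g i" for a
      using A5 \<open>i < n\<close> that by (simp add: x'_def)
  qed
  show ?thesis
    unfolding grad_Lfun[OF l_deriv]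
    by (rule norm_Lgrad_Newton_step_le[OF l'_deriv _ Newton rows_bounded]) (use A4 in blast)
qed

end
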